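(* Let $X$ be a real Hilbert space and $A,B$ nonempty closed convex subsets of $X$, and let $v$ be the displacement vector of $(A,B)$. Suppose there exist $e\in A\cap(B-v)$ and a continuous linear functional $x^*\in X^*$ with $\|x^*\|=1$ such that $$\inf x^*(B-v)=x^*(e)=\sup x^*(A)$$ and such that $x^*$ strongly exposes $A$ at $e$. Then the couple $(A,B)$ is regular.
   Context: $\mathrm{dist}(x,S)=\inf_{s\in S}\|x-s\|$, $\mathrm{dist}(S,T)=\inf_{s\in S}\mathrm{dist}(s,T)$. $v=P_{\overline{B-A}}(0)$, the metric projection of $0$ onto the closure of $B-A$. $E=\{a\in A:\mathrm{dist}(a,B)=\mathrm{dist}(A,B)\}$, $F=\{b\in B:\mathrm{dist}(b,A)=\mathrm{dist}(A,B)\}$. The couple $(A,B)$ (with $E,F$ nonempty) is regular if for each $\epsilon>0$ there is $\delta>0$ such that $\mathrm{dist}(x,E)\le\epsilon$ whenever $x\in X$ and $\max\{\mathrm{dist}(x,A),\mathrm{dist}(x,B-v)\}\le\delta$. A functional $f\in X^*\setminus\{0\}$ strongly exposes $A$ at $a\in A$ if $f(a)=\sup f(A)$ and every sequence $\{x_n\}\subset A$ with $\lim_n f(x_n)=\sup f(A)$ converges in norm to $a$. *)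

theory Defs
  imports "HOL-Analysis.Analysis"
begin

definition set_dist :: "'a::metric_space set \<Rightarrow> 'a set \<Rightarrow> real" where
  "set_dist S T = (INF s\<in>S. infdist s T)"

definition minus_set :: "'a::real_normed_vector set \<Rightarrow> 'a set \<Rightarrow> 'a set" where
  "minus_set B A = {b - a | a b. a \<in> A \<and> b \<in> B}"

definition displacement :: "'a::real_inner set \<Rightarrow> 'a set \<Rightarrow> 'a" where
  "displacement A B = (THE v. v \<in> closure (minus_set B A) \<and>
                          (\<forall>w \<in> closure (minus_set B A). norm v \<le> norm w))"

definition nearest_A :: "'a::metric_space set \<Rightarrow> 'a set \<Rightarrow> 'a set" where
  "nearest_A A B = {a \<in> A. infdist a B = set_dist A B}"

definition nearest_B :: "'a::metric_space set \<Rightarrow> 'a set \<Rightarrow> 'a set" where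
  "nearest_B A B = {b \<in> B. infdist b A = set_dist A B}"

definition regular_couple :: "'a::real_inner set \<Rightarrow> 'a set \<Rightarrow> bool" where
  "regular_couple A B \<longleftrightarrow> nearest_A A B \<noteq> {} \<and> nearest_B A B \<noteq> {} \<and>
     (\<forall>\<epsilon>>0. \<exists>\<delta>>0. \<forall>x. max (infdist x A) (infdist x ((\<lambda>b. b - displacement A B) ` B)) \<le> \<delta>
                      \<longrightarrow> infdist x (nearest_A A B) \<le> \<epsilon>)"

definition strongly_exposes :: "('a::real_normed_vector \<Rightarrow> real) \<Rightarrow> 'a set \<Rightarrow> 'a \<Rightarrow> bool" where
  "strongly_exposes f A a \<longleftrightarrow> bounded_linear f \<and> f \<noteq> (\<lambda>_. 0) \<and> a \<in> A \<and>
     (\<forall>x\<in>A. f x \<le> f a) \<and>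
     (\<forall>xs. (\<forall>n. xs n \<in> A) \<and> (\<lambda>n. f (xs n)) \<longlonglongrightarrow> f a \<longrightarrow> xs \<longlonglongrightarrow> a)"

end

theory Submission
  imports Defs
begin

text \<open>
  The displacement vector v is the minimal-norm point of the closed convex set cl(B - A); it
  exists and is unique by the parallelogram law, and norm v is a lower bound for all distances
  between A and B. Hence e and e + v realise the distance of A and B, so they are nearest points.
  If x is within delta of both A and B - v, pick a in A and y in B - v near x. The functional
  is at least f e on B - v and is Lipschitz, so f a > f e - O(delta); strong exposure then forces
  a, and with it x, to be close to the nearest point e.
\<close>

lemma norm_diff_sq_midpoint:
  fixes x y :: "'a::real_inner"
  shows "norm (x - y)^2 = 2 * norm x^2 + 2 * norm y^2 - 4 * norm (midpoint x y)^2"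
  by (simp add: midpoint_def power2_norm_eq_inner inner_simps inner_commute algebra_simps)

lemma convex_midpoint:
  fixes C :: "'a::real_vector set"
  assumes "convex C" "x \<in> C" "y \<in> C"
  shows "midpoint x y \<in> C"
  using convexD[OF assms, of "1/2" "1/2"] by (simp add: midpoint_def scaleR_right_distrib)

lemma convex_norm_diff_sq_le:
  fixes C :: "'a::real_inner set"
  assumes "convex C" "x \<in> C" "y \<in> C" "\<And>w. w \<in> C \<Longrightarrow> d \<le> norm w^2"
  shows "norm (x - y)^2 \<le> 2 * (norm x^2 - d) + 2 * (norm y^2 - d)"
  using assms(4)[OF convex_midpoint[OF assms(1-3)]] norm_diff_sq_midpoint[of x y]
  by (simp add: algebra_simps)

lemma minus_set_eq: "minus_set B A = (\<Union>b\<in>B. \<Union>a\<in>A. {b - a})"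
  unfolding minus_set_def by blast

lemma set_dist_eq_setdist: "A \<noteq> {} \<Longrightarrow> set_dist A B = setdist A B"
  by (simp add: set_dist_def setdist_eq_infdist)

lemma infdist_ltE:
  assumes "A \<noteq> {}" "infdist x A < r"
  obtains a where "a \<in> A" "dist x a < r"
  using assms by (auto simp: infdist_notempty cINF_less_iff)

lemma min_norm_point_unique:
  fixes C :: "'a::real_inner set"
  assumes "convex C" "u \<in> C" "v \<in> C" "\<forall>w\<in>C. norm u \<le> norm w" "\<forall>w\<in>C. norm v \<le> norm w"
  shows "u = v"
proof -
  have "norm u = norm v" using assms(2-5) by (simp add: order_antisym)
  moreover have "norm u^2 \<le> norm w^2" if "w \<in> C" for w
    using assms(4) that by (simp add: power_mono)
  ultimately have "norm (u - v)^2 \<le> 0"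
    using convex_norm_diff_sq_le[OF assms(1-3), of "norm u^2"] by simp
  then show ?thesis by simp
qed

lemma min_norm_point_exists:
  fixes C :: "'a::{real_inner,complete_space} set"
  assumes "closed C" "convex C" "C \<noteq> {}"
  obtains v where "v \<in> C" "\<forall>w\<in>C. norm v \<le> norm w"
proof -
  define d where "d = (INF w\<in>C. norm w^2)"
  have bdd: "bdd_below ((\<lambda>w. norm w^2) ` C)"
    by (rule bdd_belowI[of _ 0]) auto
  have d_le: "d \<le> norm w^2" if "w \<in> C" for w
    unfolding d_def using bdd that by (rule cINF_lower)
  have "\<exists>c\<in>C. norm c^2 < d + inverse (Suc n)" for n
    using cINF_less_iff[OF assms(3) bdd, of "d + inverse (Suc n)"] by (simp add: d_def)
  then obtain c where c_in: "\<And>n. c n \<in> C" and c_lt: "\<And>n. norm (c n)^2 < d + inverse (Suc n)"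
    by metis
  have "Cauchy c"
  proof (rule CauchyI)
    fix \<epsilon> :: real assume "\<epsilon> > 0"
    then obtain N where N: "inverse (Suc N) < \<epsilon>^2 / 4"
      using reals_Archimedean[of "\<epsilon>^2 / 4"] by auto
    have "norm (c m - c n) < \<epsilon>" if "N \<le> m" "N \<le> n" for m n
    proof -
      have "inverse (Suc m) \<le> inverse (Suc N)" "inverse (Suc n) \<le> inverse (Suc N)"
        using that by (simp_all add: field_simps)
      moreover have "norm (c m - c n)^2 \<le> 2 * (norm (c m)^2 - d) + 2 * (norm (c n)^2 - d)"
        by (rule convex_norm_diff_sq_le) (use assms(2) c_in d_le in auto)
      ultimately have "norm (c m - c n)^2 < \<epsilon>^2"
        using c_lt[of m] c_lt[of n] N by argo
      then show ?thesis using \<open>\<epsilon> > 0\<close> by (simp add: power_less_imp_less_base)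
    qed
    then show "\<exists>M. \<forall>m\<ge>M. \<forall>n\<ge>M. norm (c m - c n) < \<epsilon>" by blast
  qed
  then obtain v where lim: "c \<longlonglongrightarrow> v"
    using convergent_eq_Cauchy by blast
  have "v \<in> C"
    using closed_sequentially[OF assms(1) _ lim] c_in by blast
  moreover have "norm v^2 \<le> d"
  proof (rule LIMSEQ_le)
    show "(\<lambda>n. norm (c n)^2) \<longlonglongrightarrow> norm v^2" by (intro tendsto_intros lim)
    show "(\<lambda>n. d + inverse (Suc n)) \<longlonglongrightarrow> d" by (rule LIMSEQ_inverse_real_of_nat_add)
    show "\<exists>N. \<forall>n\<ge>N. norm (c n)^2 \<le> d + inverse (Suc n)" using c_lt less_imp_le by blast
  qed
  then have "\<forall>w\<in>C. norm v \<le> norm w"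
    using d_le by (meson order_trans power2_le_imp_le norm_ge_zero)
  ultimately show ?thesis by (rule that)
qed

lemma displacement_le_dist:
  fixes A B :: "'a::{real_inner,complete_space} set"
  assumes "convex A" "convex B" "a \<in> A" "b \<in> B"
  shows "norm (displacement A B) \<le> dist a b"
proof -
  let ?C = "closure (minus_set B A)"
  have "convex ?C"
    using convex_differences[OF assms(2,1)] by (simp add: minus_set_eq convex_closure)
  have "b - a \<in> minus_set B A"
    using assms(3,4) unfolding minus_set_def by blast
  then have ba: "b - a \<in> ?C"
    using closure_subset by blast
  then have "?C \<noteq> {}"
    by auto
  then obtain v where v: "v \<in> ?C" "\<forall>w\<in>?C. norm v \<le> norm w"
    by (rule min_norm_point_exists[OF closed_closure \<open>convex ?C\<close>])
  have "displacement A B = v"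
    unfolding displacement_def
  proof (rule the_equality)
    show "v \<in> ?C \<and> (\<forall>w\<in>?C. norm v \<le> norm w)" using v by blast
    show "u = v" if "u \<in> ?C \<and> (\<forall>w\<in>?C. norm u \<le> norm w)" for u
      using min_norm_point_unique[OF \<open>convex ?C\<close>, of u v] that v by simp
  qed
  moreover have "norm v \<le> norm (b - a)"
    using v(2) ba by blast
  ultimately show ?thesis
    by (simp add: dist_norm norm_minus_commute)
qed

lemma closest_pair_nearest:
  fixes A B :: "'a::metric_space set"
  assumes "a \<in> A" "b \<in> B" "\<And>x y. x \<in> A \<Longrightarrow> y \<in> B \<Longrightarrow> dist a b \<le> dist x y"
  shows "a \<in> nearest_A A B" "b \<in> nearest_B A B"
proof -
  have "set_dist A B = setdist A B"
    using assms(1) set_dist_eq_setdist by blast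
  also have "\<dots> = dist a b"
    by (rule setdist_unique) (use assms in blast)+
  finally have "set_dist A B = dist a b" .
  moreover have "infdist a B = dist a b"
    unfolding infdist_eq_setdist by (rule setdist_unique) (use assms in blast)+
  moreover have "infdist b A = dist b a"
    unfolding infdist_eq_setdist
    by (rule setdist_unique) (use assms in \<open>auto simp: dist_commute\<close>)
  ultimately show "a \<in> nearest_A A B" "b \<in> nearest_B A B"
    using assms(1,2) by (simp_all add: nearest_A_def nearest_B_def dist_commute)
qed

lemma strongly_exposes_uniformly:
  assumes "strongly_exposes f A e" "\<epsilon> > 0"
  obtains \<eta> where "\<eta> > 0" "\<And>a. a \<in> A \<Longrightarrow> f e - \<eta> < f a \<Longrightarrow> dist a e < \<epsilon>"
proof (rule ccontr)
  assume "\<not> thesis"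
  then have "\<exists>a\<in>A. f e - inverse (Suc n) < f a \<and> \<epsilon> \<le> dist a e" for n
    using that[of "inverse (Suc n)"] by force
  then obtain xs where xs_in: "\<And>n. xs n \<in> A"
    and xs_f: "\<And>n. f e - inverse (Suc n) < f (xs n)" and xs_far: "\<And>n. \<epsilon> \<le> dist (xs n) e"
    by metis
  have "(\<lambda>n. f (xs n)) \<longlonglongrightarrow> f e"
  proof (rule tendsto_sandwich)
    show "\<forall>\<^sub>F n in sequentially. f e + - inverse (Suc n) \<le> f (xs n)"
      using xs_f by (simp add: less_imp_le)
    show "\<forall>\<^sub>F n in sequentially. f (xs n) \<le> f e"
      using assms(1) xs_in by (simp add: strongly_exposes_def)
    show "(\<lambda>n. f e + - inverse (Suc n)) \<longlonglongrightarrow> f e"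
      by (rule LIMSEQ_inverse_real_of_nat_add_minus)
  qed simp
  then have "xs \<longlonglongrightarrow> e"
    using assms(1) xs_in by (simp add: strongly_exposes_def)
  then obtain n where "dist (xs n) e < \<epsilon>"
    using assms(2) lim_sequentially by blast
  then show False using xs_far[of n] by simp
qed

lemma close_to_both_imp_close_to_exposed_point:
  fixes f :: "'a::real_normed_vector \<Rightarrow> real"
  assumes exp: "strongly_exposes f A e" and "D \<noteq> {}" "\<forall>y\<in>D. f e \<le> f y" "\<epsilon> > 0"
  obtains \<delta> where "\<delta> > 0" "\<And>x. max (infdist x A) (infdist x D) \<le> \<delta> \<Longrightarrow> dist x e \<le> \<epsilon>"
proof -
  obtain K where K: "K > 0" "\<And>x. \<bar>f x\<bar> \<le> norm x * K"
    using exp bounded_linear.pos_bounded[of f] by (auto simp: strongly_exposes_def)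
  obtain \<eta> where \<eta>: "\<eta> > 0" "\<And>a. a \<in> A \<Longrightarrow> f e - \<eta> < f a \<Longrightarrow> dist a e < \<epsilon> / 2"
    using strongly_exposes_uniformly[OF exp, of "\<epsilon> / 2"] \<open>\<epsilon> > 0\<close> by auto
  define \<delta> where "\<delta> = min (\<epsilon> / 4) (\<eta> / (4 * K))"
  have "\<delta> > 0" using \<open>\<epsilon> > 0\<close> \<eta>(1) K(1) by (simp add: \<delta>_def)
  moreover have "dist x e \<le> \<epsilon>" if x: "max (infdist x A) (infdist x D) \<le> \<delta>" for x
  proof -
    have "A \<noteq> {}" using exp by (auto simp: strongly_exposes_def)
    then obtain a where a: "a \<in> A" "dist x a < 2 * \<delta>"
      by (rule infdist_ltE) (use x \<open>\<delta> > 0\<close> in auto)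
    obtain y where y: "y \<in> D" "dist x y < 2 * \<delta>"
      using \<open>D \<noteq> {}\<close> by (rule infdist_ltE) (use x \<open>\<delta> > 0\<close> in auto)
    have "f e - f a \<le> f (y - a)"
      using assms(3) y(1) exp by (simp add: strongly_exposes_def linear_diff bounded_linear.linear)
    also have "\<dots> \<le> dist y a * K"
      using K(2)[of "y - a"] by (simp add: dist_norm)
    also have "\<dots> < 4 * \<delta> * K"
      using a(2) y(2) dist_triangle3[of y a x] K(1) by (simp add: mult_strict_right_mono)
    also have "\<dots> \<le> \<eta>"
      using K(1) pos_le_divide_eq[of "4 * K" \<delta> \<eta>] by (simp add: \<delta>_def mult_ac)
    finally have "dist a e < \<epsilon> / 2"
      using \<eta>(2) a(1) by simp
    then show ?thesis
      using a(2) dist_triangle[of x e a] by (simp add: \<delta>_def)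
  qed
  ultimately show ?thesis using that by blast
qed

theorem proposition4p15:
  fixes A B :: "'a::{real_inner, complete_space} set"
    and f :: "'a \<Rightarrow> real" and e :: 'a
  assumes "A \<noteq> {}" "B \<noteq> {}" "closed A" "closed B" "convex A" "convex B"
    and "bounded_linear f" "onorm f = 1"
    and "e \<in> A \<inter> (\<lambda>b. b - displacement A B) ` B"
    and "\<forall>y \<in> (\<lambda>b. b - displacement A B) ` B. f e \<le> f y"
    and "\<forall>a \<in> A. f a \<le> f e"
    and "strongly_exposes f A e"
  shows "regular_couple A B"
proof -
  define v where "v = displacement A B"
  define D where "D = (\<lambda>b. b - v) ` B"
  obtain b where "b \<in> B" and e_eq: "e = b - v" and "e \<in> A"
    using assms(9) by (auto simp: v_def)
  have "dist e b \<le> dist x y" if "x \<in> A" "y \<in> B" for x y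
    using displacement_le_dist[OF assms(5,6) that] by (simp add: e_eq dist_norm v_def)
  then have e_nearest: "e \<in> nearest_A A B" and b_nearest: "b \<in> nearest_B A B"
    using closest_pair_nearest[OF \<open>e \<in> A\<close> \<open>b \<in> B\<close>] by auto
  have D_ne: "D \<noteq> {}" and D_above: "\<forall>y\<in>D. f e \<le> f y"
    using assms(2,10) by (simp_all add: D_def v_def)
  have "\<exists>\<delta>>0. \<forall>x. max (infdist x A) (infdist x D) \<le> \<delta> \<longrightarrow> infdist x (nearest_A A B) \<le> \<epsilon>"
    if "\<epsilon> > 0" for \<epsilon>
  proof -
    obtain \<delta> where "\<delta> > 0" and "\<And>x. max (infdist x A) (infdist x D) \<le> \<delta> \<Longrightarrow> dist x e \<le> \<epsilon>"
      using close_to_both_imp_close_to_exposed_point[OF assms(12) D_ne D_above \<open>\<epsilon> > 0\<close>] by blast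
    then show ?thesis
      using infdist_le2[OF e_nearest] by blast
  qed
  then show ?thesis
    using e_nearest b_nearest unfolding regular_couple_def D_def v_def by blast
qed

end
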